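(* For any population, set of $M$ units and budget $K$, the LEA algorithm uses $O\big(M\ln(2M/\delta)/\epsilon\big)$ samples and, with probability at least $1-\delta$, returns an allocation $\mathcal U_{\mathsf{LTK}}$ satisfying $$\frac{V_{\mathcal U_{\mathsf{LTK}}}}{V_{\mathcal U^*}}\ \ge\ 1-\frac{4\gamma\,\theta_K}{\gamma_1+\tau_K\theta_K}\sqrt{\epsilon},$$ where $\theta_K=\Pr_\tau\big[[\tau_K,\tau_K+2\rho]\big]$ and $\gamma_1=\frac1M\sum_{u:\tau(u)>\tau_K+2\rho}\tau(u)$.
   Context: There are $M$ units with pairwise distinct treatment effects $\tau(u)\in[0,1]$ and a budget $K\in\{1,\dots,M\}$; $\tau_K$ is the $K$-th largest value of $\tau(u)$; $\mathcal U^*$ is the set of the $K$ units with the largest $\tau(u)$; for a set $S$ of units $V_S=\sum_{u\in S}\tau(u)$. $\Pr_\tau[S]=|\{u:\tau(u)\in S\}|/M$. An estimation oracle, given $u$ and $\epsilon',\delta'$, returns $\hat\tau(u)$ with $|\hat\tau(u)-\tau(u)|\le\epsilon'$ with probability at least $1-\delta'$ at a cost of $O(\ln(2/\delta')/\epsilon'^2)$ samples. The LEA algorithm: input $M$ units, budget $K$, parameters $\epsilon,\delta,\gamma>0$ with $\gamma=\Theta(1)$; set $\rho=\gamma\sqrt\epsilon$; obtain a $(\rho,\delta/M)$-accurate estimate $\hat\tau(u)$ of each unit; output the $K$ units with the largest $\hat\tau(u)$. *)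

theory Defs
  imports "HOL-Probability.Probability"
begin

definition kth_largest :: "('u \<Rightarrow> real) \<Rightarrow> 'u set \<Rightarrow> nat \<Rightarrow> real" where
  "kth_largest \<tau> U K = rev (sorted_list_of_set (\<tau> ` U)) ! (K - 1)"

text \<open>The set of the K units with the largest tau (well defined since tau is injective on U).\<close>
definition top_units :: "('u \<Rightarrow> real) \<Rightarrow> 'u set \<Rightarrow> nat \<Rightarrow> 'u set" where
  "top_units \<tau> U K = {u \<in> U. kth_largest \<tau> U K \<le> \<tau> u}"

definition Val :: "('u \<Rightarrow> real) \<Rightarrow> 'u set \<Rightarrow> real" where
  "Val \<tau> S = (\<Sum>u\<in>S. \<tau> u)"

definition Pr_tau :: "('u \<Rightarrow> real) \<Rightarrow> 'u set \<Rightarrow> real set \<Rightarrow> real" where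
  "Pr_tau \<tau> U I = real (card {u \<in> U. \<tau> u \<in> I}) / real (card U)"

definition is_topK :: "('u \<Rightarrow> real) \<Rightarrow> 'u set \<Rightarrow> nat \<Rightarrow> 'u set \<Rightarrow> bool" where
  "is_topK f U K S \<longleftrightarrow> S \<subseteq> U \<and> card S = K \<and> (\<forall>u\<in>S. \<forall>v\<in>U - S. f v \<le> f u)"

end

theory Submission
  imports Defs
begin

text \<open>Each estimate fails with probability at most \<delta>/M, so by the union bound all of them are
  \<rho>-accurate with probability at least 1 - \<delta>. On that event the selection S is controlled
  deterministically: a unit with \<tau> > \<tau>K + 2\<rho> looks better than every unit with \<tau> < \<tau>K and is
  therefore selected, while a selected unit looks at least as good as some unselected top unit
  and therefore has \<tau> \<ge> \<tau>K - 2\<rho>. So S and U* share the units above \<tau>K + 2\<rho>, and each contains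
  m = M \<theta>K further units, worth at most \<tau>K + 2\<rho> each in U* and at least \<tau>K - 2\<rho> each in S.
  Hence V_S \<ge> V_U* - 4\<rho>m, while V_U* \<ge> M (\<gamma>1 + \<tau>K \<theta>K).\<close>

lemma in_set_drop_iff: "x \<in> set (drop i xs) \<longleftrightarrow> (\<exists>j. i \<le> j \<and> j < length xs \<and> xs ! j = x)"
proof
  assume "x \<in> set (drop i xs)"
  then obtain k where "k < length xs - i" "x = xs ! (i + k)" by (auto simp: in_set_conv_nth)
  then show "\<exists>j. i \<le> j \<and> j < length xs \<and> xs ! j = x" by (intro exI[of _ "i + k"]) auto
next
  assume "\<exists>j. i \<le> j \<and> j < length xs \<and> xs ! j = x"
  then obtain j where "i \<le> j" "j < length xs" "xs ! j = x" by blast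
  then show "x \<in> set (drop i xs)" by (auto simp: in_set_conv_nth intro!: exI[of _ "j - i"])
qed

lemma strict_sorted_nth_le_iff:
  fixes xs :: "'a::linorder list"
  assumes "sorted_wrt (<) xs" "i < length xs" "j < length xs"
  shows "xs ! i \<le> xs ! j \<longleftrightarrow> i \<le> j"
  using assms sorted_wrt_nth_less[OF assms(1), of i j] sorted_wrt_nth_less[OF assms(1), of j i]
  by (cases i j rule: linorder_cases) auto

lemma set_drop_strict_sorted:
  fixes xs :: "'a::linorder list"
  assumes "sorted_wrt (<) xs" "i < length xs"
  shows "set (drop i xs) = {x \<in> set xs. xs ! i \<le> x}"
  unfolding set_eq_iff in_set_drop_iff using assms by (auto simp: in_set_conv_nth strict_sorted_nth_le_iff)

lemma (in prob_space) prob_INT_ge: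
  assumes "finite I" "I \<noteq> {}"
    and events: "\<And>i. i \<in> I \<Longrightarrow> A i \<in> events"
    and prob_ge: "\<And>i. i \<in> I \<Longrightarrow> 1 - d i \<le> prob (A i)"
  shows "1 - (\<Sum>i\<in>I. d i) \<le> prob (\<Inter>i\<in>I. A i)"
proof -
  have "prob (space M - (\<Inter>i\<in>I. A i)) = prob (\<Union>i\<in>I. space M - A i)" by auto
  also have "\<dots> \<le> (\<Sum>i\<in>I. prob (space M - A i))"
    using \<open>finite I\<close> events by (intro finite_measure_subadditive_finite) auto
  also have "\<dots> \<le> (\<Sum>i\<in>I. d i)"
    using prob_ge by (intro sum_mono) (simp add: prob_compl events algebra_simps)
  finally show ?thesis
    using assms by (simp add: prob_compl sets.finite_INT)
qed

lemma (in prob_space) all_estimates_accurate: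
  fixes X :: "'u \<Rightarrow> 'a \<Rightarrow> real" and \<tau> :: "'u \<Rightarrow> real" and d e :: real
  assumes "finite U" "U \<noteq> {}"
    and measurable: "\<And>u. u \<in> U \<Longrightarrow> X u \<in> borel_measurable M"
    and accurate: "\<And>u. u \<in> U \<Longrightarrow> 1 - d \<le> prob {\<omega> \<in> space M. \<bar>X u \<omega> - \<tau> u\<bar> \<le> e}"
  shows "\<exists>A\<in>events. 1 - card U * d \<le> prob A \<and> (\<forall>\<omega>\<in>A. \<forall>u\<in>U. \<bar>X u \<omega> - \<tau> u\<bar> \<le> e)"
proof
  define A where "A = (\<Inter>u\<in>U. {\<omega> \<in> space M. \<bar>X u \<omega> - \<tau> u\<bar> \<le> e})"
  have events: "{\<omega> \<in> space M. \<bar>X u \<omega> - \<tau> u\<bar> \<le> e} \<in> events" if "u \<in> U" for u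
    using measurable[OF that] by measurable
  then show "A \<in> events" using assms(1,2) by (auto simp: A_def)
  have "1 - (\<Sum>u\<in>U. d) \<le> prob A"
    unfolding A_def using assms(1,2) events accurate by (rule prob_INT_ge)
  then show "1 - card U * d \<le> prob A \<and> (\<forall>\<omega>\<in>A. \<forall>u\<in>U. \<bar>X u \<omega> - \<tau> u\<bar> \<le> e)"
    using assms(1,2) by (auto simp: A_def)
qed

lemma uniform_sample_cost_le:
  fixes c :: "'u \<Rightarrow> real"
  assumes "0 \<le> \<epsilon>"
    and "\<And>u. u \<in> U \<Longrightarrow> c u \<le> C * ln (2 / (\<delta> / real (card U))) / (\<gamma> * sqrt \<epsilon>) ^ 2"
  shows "(\<Sum>u\<in>U. c u) \<le> (C / \<gamma> ^ 2) * real (card U) * ln (2 * real (card U) / \<delta>) / \<epsilon>"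
proof -
  have "(\<Sum>u\<in>U. c u) \<le> real (card U) * (C * ln (2 / (\<delta> / real (card U))) / (\<gamma> * sqrt \<epsilon>) ^ 2)"
    using assms(2) by (rule sum_bounded_above)
  also have "\<dots> = (C / \<gamma> ^ 2) * real (card U) * ln (2 * real (card U) / \<delta>) / \<epsilon>"
    using assms(1) by (simp add: power_mult_distrib)
  finally show ?thesis .
qed

lemma normalized_loss_eq:
  fixes M m V t \<rho> :: real
  assumes "0 < M"
  shows "4 * \<rho> * (m / M) / (1 / M * V + t * (m / M)) = 4 * \<rho> * m / (V + m * t)"
  using assms by (simp add: field_simps add_divide_distrib[symmetric])

locale ranked_units =
  fixes \<tau> :: "'u \<Rightarrow> real" and U :: "'u set" and K :: nat
  assumes finite_U: "finite U" and inj_\<tau>: "inj_on \<tau> U" and K_pos: "1 \<le> K" and K_le: "K \<le> card U"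
begin

lemma card_image_\<tau>: "card (\<tau> ` U) = card U"
  using finite_U inj_\<tau> by (simp add: card_image)

lemma kth_largest_eq_nth: "kth_largest \<tau> U K = sorted_list_of_set (\<tau> ` U) ! (card U - K)"
  using K_pos K_le by (simp add: kth_largest_def rev_nth card_image_\<tau> Suc_diff_le)

lemma kth_largest_in_image: "kth_largest \<tau> U K \<in> \<tau> ` U"
proof -
  have "kth_largest \<tau> U K \<in> set (sorted_list_of_set (\<tau> ` U))"
    unfolding kth_largest_eq_nth using K_pos K_le by (intro nth_mem) (simp add: card_image_\<tau>)
  then show ?thesis using finite_U by simp
qed

lemma image_top_units:
  "\<tau> ` top_units \<tau> U K = set (drop (card U - K) (sorted_list_of_set (\<tau> ` U)))"
proof -
  have "set (drop (card U - K) (sorted_list_of_set (\<tau> ` U)))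
      = {x \<in> \<tau> ` U. kth_largest \<tau> U K \<le> x}"
    using K_pos K_le finite_U unfolding kth_largest_eq_nth
    by (subst set_drop_strict_sorted) (auto simp: card_image_\<tau>)
  then show ?thesis by (auto simp: top_units_def)
qed

lemma card_top_units: "card (top_units \<tau> U K) = K"
proof -
  have "inj_on \<tau> (top_units \<tau> U K)"
    using inj_\<tau> by (rule inj_on_subset) (auto simp: top_units_def)
  then have "card (top_units \<tau> U K) = card (\<tau> ` top_units \<tau> U K)" by (simp add: card_image)
  also have "\<dots> = K"
    unfolding image_top_units using K_le by (simp add: distinct_card card_image_\<tau>)
  finally show ?thesis .
qed

lemma card_above_kth_largest: "card {u \<in> U. kth_largest \<tau> U K < \<tau> u} = K - 1"
proof -
  obtain u0 where u0: "u0 \<in> U" "\<tau> u0 = kth_largest \<tau> U K"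
    using kth_largest_in_image by (metis imageE)
  then have "top_units \<tau> U K = insert u0 {u \<in> U. kth_largest \<tau> U K < \<tau> u}"
    using inj_\<tau> by (auto simp: top_units_def inj_on_def order_le_less)
  then show ?thesis using card_top_units finite_U u0 by simp
qed

end

locale accurate_selection = ranked_units +
  fixes e :: "'u \<Rightarrow> real" and S :: "'u set" and \<rho> :: real
  assumes accurate: "\<And>u. u \<in> U \<Longrightarrow> \<bar>e u - \<tau> u\<bar> \<le> \<rho>"
    and selection: "is_topK e U K S"
begin

text \<open>In the notation of the theorem, card band = M \<theta>K and Val \<tau> high = M \<gamma>1.\<close>

abbreviation "\<tau>\<^sub>K \<equiv> kth_largest \<tau> U K"
abbreviation "high \<equiv> {u \<in> U. \<tau> u > \<tau>\<^sub>K + 2 * \<rho>}"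
abbreviation "band \<equiv> {u \<in> U. \<tau> u \<in> {\<tau>\<^sub>K .. \<tau>\<^sub>K + 2 * \<rho>}}"

lemma S_subset: "S \<subseteq> U" and card_S: "card S = K"
  and selection_mono: "u \<in> S \<Longrightarrow> v \<in> U - S \<Longrightarrow> e v \<le> e u"
  using selection by (auto simp: is_topK_def)

lemma finite_S: "finite S"
  using S_subset finite_U by (rule finite_subset)

lemma rho_nonneg: "0 \<le> \<rho>"
proof -
  obtain u where "u \<in> U" using K_pos K_le by fastforce
  then show ?thesis using accurate[of u] by linarith
qed

lemma selected_value_bound:
  assumes "u \<in> S" "v \<in> U - S"
  shows "\<tau> v - 2 * \<rho> \<le> \<tau> u"
  using selection_mono[OF assms] accurate[of u] accurate[of v] assms S_subset by force

lemma high_subset_S: "high \<subseteq> S"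
proof
  fix v assume v: "v \<in> high"
  show "v \<in> S"
  proof (rule ccontr)
    assume "v \<notin> S"
    then have "S \<subseteq> {u \<in> U. \<tau>\<^sub>K < \<tau> u}"
      using v S_subset selected_value_bound[of _ v] by fastforce
    then have "card S \<le> card {u \<in> U. \<tau>\<^sub>K < \<tau> u}" using finite_U by (intro card_mono) auto
    then show False
      using card_above_kth_largest card_S K_pos by simp
  qed
qed

lemma selected_ge: "u \<in> S \<Longrightarrow> \<tau>\<^sub>K - 2 * \<rho> \<le> \<tau> u"
proof (cases "top_units \<tau> U K \<subseteq> S")
  case True
  then have "top_units \<tau> U K = S"
    using card_subset_eq[OF finite_S True] card_S card_top_units by simp
  moreover assume "u \<in> S"
  ultimately show ?thesis using rho_nonneg by (auto simp: top_units_def)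
next
  case False
  then obtain w where "w \<in> top_units \<tau> U K" "w \<notin> S" by blast
  moreover assume "u \<in> S"
  ultimately show ?thesis using selected_value_bound[of u w] by (auto simp: top_units_def)
qed

lemma top_units_eq: "top_units \<tau> U K = high \<union> band"
  using rho_nonneg by (auto simp: top_units_def)

lemma card_band: "card band = K - card high"
proof -
  have "band = top_units \<tau> U K - high" by (auto simp: top_units_def)
  moreover have "high \<subseteq> top_units \<tau> U K" using top_units_eq by blast
  ultimately show ?thesis
    using finite_U card_top_units by (simp add: card_Diff_subset)
qed

lemma Val_top_units_eq: "Val \<tau> (top_units \<tau> U K) = Val \<tau> high + Val \<tau> band"
  unfolding top_units_eq Val_def using finite_U by (intro sum.union_disjoint) auto

lemma Val_top_units_le: "Val \<tau> (top_units \<tau> U K) \<le> Val \<tau> high + card band * (\<tau>\<^sub>K + 2 * \<rho>)"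
proof -
  have "Val \<tau> band \<le> (\<Sum>u\<in>band. \<tau>\<^sub>K + 2 * \<rho>)" unfolding Val_def by (intro sum_mono) auto
  then show ?thesis using Val_top_units_eq by simp
qed

lemma Val_top_units_ge: "Val \<tau> high + card band * \<tau>\<^sub>K \<le> Val \<tau> (top_units \<tau> U K)"
proof -
  have "(\<Sum>u\<in>band. \<tau>\<^sub>K) \<le> Val \<tau> band" unfolding Val_def by (intro sum_mono) auto
  then show ?thesis using Val_top_units_eq by simp
qed

lemma Val_S_ge: "Val \<tau> high + card band * (\<tau>\<^sub>K - 2 * \<rho>) \<le> Val \<tau> S"
proof -
  have "card (S - high) = card band"
    using high_subset_S finite_U card_S card_band by (simp add: card_Diff_subset)
  moreover have "(\<Sum>u\<in>S - high. \<tau>\<^sub>K - 2 * \<rho>) \<le> Val \<tau> (S - high)"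
    unfolding Val_def using selected_ge by (intro sum_mono) auto
  moreover have "Val \<tau> S = Val \<tau> high + Val \<tau> (S - high)"
    unfolding Val_def using high_subset_S finite_S by (simp add: sum.subset_diff)
  ultimately show ?thesis by simp
qed

lemma Val_ratio_ge:
  assumes nonneg: "\<And>u. u \<in> U \<Longrightarrow> 0 \<le> \<tau> u" and pos: "0 < Val \<tau> (top_units \<tau> U K)"
  shows "1 - 4 * \<rho> * card band / (Val \<tau> high + card band * \<tau>\<^sub>K)
           \<le> Val \<tau> S / Val \<tau> (top_units \<tau> U K)"
proof -
  define D where "D = Val \<tau> high + card band * \<tau>\<^sub>K"
  have loss: "Val \<tau> (top_units \<tau> U K) - 4 * \<rho> * card band \<le> Val \<tau> S"
    using Val_top_units_le Val_S_ge by (simp add: algebra_simps)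
  have "0 \<le> Val \<tau> high" unfolding Val_def using nonneg by (intro sum_nonneg) auto
  obtain u0 where u0: "u0 \<in> U" "\<tau> u0 = \<tau>\<^sub>K"
    using kth_largest_in_image by (metis imageE)
  then have "u0 \<in> band" using rho_nonneg by simp
  then have "card band \<noteq> 0" using finite_U by auto
  have "0 \<le> \<tau>\<^sub>K" using u0 nonneg by force
  show ?thesis
  proof (cases "\<tau>\<^sub>K = 0")
    case False
    then have "0 < D"
      using \<open>0 \<le> Val \<tau> high\<close> \<open>0 \<le> \<tau>\<^sub>K\<close> \<open>card band \<noteq> 0\<close> by (simp add: D_def add_nonneg_pos)
    have "1 - 4 * \<rho> * card band / D \<le> 1 - 4 * \<rho> * card band / Val \<tau> (top_units \<tau> U K)"
      using \<open>0 < D\<close> Val_top_units_ge rho_nonneg by (intro diff_left_mono divide_left_mono) (auto simp: D_def)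
    also have "\<dots> = (Val \<tau> (top_units \<tau> U K) - 4 * \<rho> * card band) / Val \<tau> (top_units \<tau> U K)"
      using pos by (simp add: field_simps)
    also have "\<dots> \<le> Val \<tau> S / Val \<tau> (top_units \<tau> U K)"
      using loss pos by (intro divide_right_mono) auto
    finally show ?thesis by (simp add: D_def)
  next
    case True
    \<comment> \<open>Every unit is then a top unit, so S is optimal. This case contains the vanishing
      denominator, where the bound degenerates to 1 since x / 0 = 0.\<close>
    then have "top_units \<tau> U K = U" using nonneg by (auto simp: top_units_def)
    then have "S = top_units \<tau> U K"
      using card_subset_eq[OF finite_U S_subset] card_S card_top_units
      by simp
    then show ?thesis using pos True rho_nonneg \<open>0 \<le> Val \<tau> high\<close>
      by (simp add: divide_nonneg_nonneg)
  qed
qed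

end

theorem claim11:
  fixes U :: "'u set" and \<tau> :: "'u \<Rightarrow> real" and K :: nat
    and \<epsilon> \<delta> \<gamma> C :: real
    and P :: "'w measure"
    and est :: "real \<Rightarrow> real \<Rightarrow> 'u \<Rightarrow> 'w \<Rightarrow> real"
    and cost :: "'u \<Rightarrow> real \<Rightarrow> real \<Rightarrow> real"
  assumes "prob_space P"
    and "finite U" and "U \<noteq> {}"
    and "inj_on \<tau> U"
    and "\<forall>u\<in>U. 0 \<le> \<tau> u \<and> \<tau> u \<le> 1"
    and "1 \<le> K" and "K \<le> card U"
    and "0 < \<epsilon>" and "0 < \<delta>" and "\<delta> < 1" and "0 < \<gamma>" and "0 < C"
    and est_meas: "\<And>e d u. 0 < e \<Longrightarrow> 0 < d \<Longrightarrow> d < 1 \<Longrightarrow> u \<in> U \<Longrightarrow>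
                     est e d u \<in> borel_measurable P"
    and est_acc: "\<And>e d u. 0 < e \<Longrightarrow> 0 < d \<Longrightarrow> d < 1 \<Longrightarrow> u \<in> U \<Longrightarrow>
                     measure P {\<omega> \<in> space P. \<bar>est e d u \<omega> - \<tau> u\<bar> \<le> e} \<ge> 1 - d"
    and est_cost: "\<And>e d u. 0 < e \<Longrightarrow> 0 < d \<Longrightarrow> d < 1 \<Longrightarrow> u \<in> U \<Longrightarrow>
                     cost u e d \<le> C * ln (2 / d) / e ^ 2"
    and "Val \<tau> (top_units \<tau> U K) > 0"
  shows "let M = card U; \<rho> = \<gamma> * sqrt \<epsilon>; \<tau>K = kth_largest \<tau> U K;
             \<theta>K = Pr_tau \<tau> U {\<tau>K .. \<tau>K + 2 * \<rho>};
             \<gamma>1 = (1 / real M) * (\<Sum>u\<in>{u \<in> U. \<tau> u > \<tau>K + 2 * \<rho>}. \<tau> u)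
         in (\<Sum>u\<in>U. cost u \<rho> (\<delta> / real M)) \<le> (C / \<gamma> ^ 2) * real M * ln (2 * real M / \<delta>) / \<epsilon>
          \<and> (\<exists>A \<in> sets P. measure P A \<ge> 1 - \<delta> \<and>
               (\<forall>\<omega> \<in> A. \<forall>S. is_topK (\<lambda>u. est \<rho> (\<delta> / real M) u \<omega>) U K S \<longrightarrow>
                  Val \<tau> S / Val \<tau> (top_units \<tau> U K)
                    \<ge> 1 - (4 * \<gamma> * \<theta>K / (\<gamma>1 + \<tau>K * \<theta>K)) * sqrt \<epsilon>))"
proof -
  interpret P: prob_space P by fact
  define M where "M = card U"
  define \<rho> where "\<rho> = \<gamma> * sqrt \<epsilon>"
  define d where "d = \<delta> / real M"
  define \<tau>K where "\<tau>K = kth_largest \<tau> U K"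
  define \<theta>K where "\<theta>K = Pr_tau \<tau> U {\<tau>K .. \<tau>K + 2 * \<rho>}"
  define \<gamma>1 where "\<gamma>1 = (1 / real M) * (\<Sum>u\<in>{u \<in> U. \<tau> u > \<tau>K + 2 * \<rho>}. \<tau> u)"
  have "0 < real M" using assms(2,3) by (simp add: M_def card_gt_0_iff)
  have "0 < \<rho>" "0 < d" "d < 1" using assms \<open>0 < real M\<close> by (auto simp: \<rho>_def d_def field_simps)
  note estimator = est_meas[OF \<open>0 < \<rho>\<close> \<open>0 < d\<close> \<open>d < 1\<close>] est_acc[OF \<open>0 < \<rho>\<close> \<open>0 < d\<close> \<open>d < 1\<close>]
    est_cost[OF \<open>0 < \<rho>\<close> \<open>0 < d\<close> \<open>d < 1\<close>]
  have cost: "(\<Sum>u\<in>U. cost u \<rho> d) \<le> (C / \<gamma> ^ 2) * real M * ln (2 * real M / \<delta>) / \<epsilon>"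
    using less_imp_le[OF assms(8)] estimator(3) unfolding M_def d_def \<rho>_def by (rule uniform_sample_cost_le)
  have "\<exists>A\<in>sets P. 1 - real M * d \<le> P.prob A \<and> (\<forall>\<omega>\<in>A. \<forall>u\<in>U. \<bar>est \<rho> d u \<omega> - \<tau> u\<bar> \<le> \<rho>)"
    unfolding M_def using assms(2,3) estimator(1,2) by (rule P.all_estimates_accurate)
  then obtain A where "A \<in> sets P" "1 - \<delta> \<le> P.prob A"
    and accurate: "\<And>\<omega> u. \<omega> \<in> A \<Longrightarrow> u \<in> U \<Longrightarrow> \<bar>est \<rho> d u \<omega> - \<tau> u\<bar> \<le> \<rho>"
    using \<open>0 < real M\<close> by (auto simp: d_def)
  moreover have "1 - (4 * \<gamma> * \<theta>K / (\<gamma>1 + \<tau>K * \<theta>K)) * sqrt \<epsilon> \<le> Val \<tau> S / Val \<tau> (top_units \<tau> U K)"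
    if "\<omega> \<in> A" "is_topK (\<lambda>u. est \<rho> d u \<omega>) U K S" for \<omega> S
  proof -
    interpret accurate_selection \<tau> U K "\<lambda>u. est \<rho> d u \<omega>" S \<rho>
      using assms(2,4,6,7) accurate that by unfold_locales auto
    have "(4 * \<gamma> * \<theta>K / (\<gamma>1 + \<tau>K * \<theta>K)) * sqrt \<epsilon> = 4 * \<rho> * \<theta>K / (\<gamma>1 + \<tau>K * \<theta>K)"
      by (simp add: \<rho>_def)
    also have "\<dots> = 4 * \<rho> * card band / (Val \<tau> high + card band * \<tau>\<^sub>K)"
      unfolding \<theta>K_def \<gamma>1_def \<tau>K_def Pr_tau_def M_def[symmetric] Val_def
      using \<open>0 < real M\<close> by (rule normalized_loss_eq)
    finally show ?thesis using Val_ratio_ge assms(5,16) by simp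
  qed
  ultimately show ?thesis
    unfolding Let_def M_def[symmetric] \<rho>_def[symmetric] d_def[symmetric] \<tau>K_def[symmetric]
      \<theta>K_def[symmetric] \<gamma>1_def[symmetric]
    using cost by blast
qed

end
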